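(* Let $q$ be a query user, let $\sigma>0$, and let $e$ be a set of users (an index node). Let $rpiv_1,\dots,rpiv_l$ be road-network pivot locations. For a user $u$ and pivot $rpiv_k$ let $a(u,k)=\frac{1}{|u.L|}\sum_{i=1}^{|u.L|} dist_{RN}(u.loc_i, rpiv_k)$, and let $lb_k(e)=\min_{u\in e}a(u,k)$, $ub_k(e)=\max_{u\in e}a(u,k)$. Define $lb\_dist_{RN}(S,e)=\max_{k=1}^{l} c_k$, where $c_k = lb_k(e)-a(q,k)$ if $a(q,k)<lb_k(e)$, $c_k=a(q,k)-ub_k(e)$ if $a(q,k)>ub_k(e)$, and $c_k=0$ otherwise. If $lb\_dist_{RN}(S,e)>\sigma$, then for every spatial-social $(k',d,\sigma,\theta)$-truss $S$ containing $q$ (for any parameters $k',d,\theta$ and query topic vector) no user of $e$ belongs to $S$.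
   Context: Users of a social network $G_s$ each have a finite nonempty set of check-in locations $u.loc_1,\dots,u.loc_{|u.L|}$ on a road network (undirected weighted graph) with shortest-path distance $dist_{RN}$. The average spatial distance is $avg\_dist_{RN}(u,v)=\frac{1}{|u.L||v.L|}\sum_i\sum_j dist_{RN}(u.loc_i,v.loc_j)$. $dist_{SN}(u,v)$ is the hop distance in $G_s$; the support of an edge in a subgraph $H$ is the number of triangles of $H$ containing it. A connected subgraph $S$ is a $(k',d)$-truss if every edge of $S$ has support in $S$ at least $k'-2$ and $dist_{SN}(u,v)<d$ for all $u,v\in V(S)$. Each edge $e_{a,b}$ carries topic probabilities $tp^j_{a,b}$; for a query topic vector $\mathcal{T}_q$ the influence of a path $a_1\to\dots\to a_m$ is $\prod_{i}\sum_j tp^j_{a_i,a_{i+1}}\mathcal{T}_q^j$. A spatial-social $(k',d,\sigma,\theta)$-truss is a user set $S$ that is a $(k',d)$-truss, satisfies $avg\_dist_{RN}(u,v)<\sigma$ for all $u,v\in S$, and such that for all $u,v\in S$ some path from $u$ to $v$ within $S$ has influence at least $\theta$. *)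

theory Defs
  imports Complex_Main "HOL-Library.Extended_Nat"
begin

definition rn_walk :: "('v \<times> 'v) set \<Rightarrow> 'v list \<Rightarrow> bool" where
  "rn_walk E xs \<longleftrightarrow> xs \<noteq> [] \<and> (\<forall>i. Suc i < length xs \<longrightarrow> (xs ! i, xs ! Suc i) \<in> E)"

definition walk_len :: "('v \<Rightarrow> 'v \<Rightarrow> real) \<Rightarrow> 'v list \<Rightarrow> real" where
  "walk_len w xs = (\<Sum>i<length xs - 1. w (xs ! i) (xs ! Suc i))"

definition road_network :: "'v set \<Rightarrow> ('v \<times> 'v) set \<Rightarrow> ('v \<Rightarrow> 'v \<Rightarrow> real) \<Rightarrow> bool" where
  "road_network V E w \<longleftrightarrow> finite V \<and> E \<subseteq> V \<times> V \<and> sym E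
     \<and> (\<forall>a b. (a, b) \<in> E \<longrightarrow> w a b = w b a \<and> w a b \<ge> 0)
     \<and> (\<forall>a\<in>V. \<forall>b\<in>V. \<exists>xs. rn_walk E xs \<and> hd xs = a \<and> last xs = b)"

definition dist_RN :: "('v \<times> 'v) set \<Rightarrow> ('v \<Rightarrow> 'v \<Rightarrow> real) \<Rightarrow> 'v \<Rightarrow> 'v \<Rightarrow> real" where
  "dist_RN E w a b = Inf {walk_len w xs | xs. rn_walk E xs \<and> hd xs = a \<and> last xs = b}"

definition avg_dist_RN :: "('v \<times> 'v) set \<Rightarrow> ('v \<Rightarrow> 'v \<Rightarrow> real) \<Rightarrow> ('u \<Rightarrow> 'v list) \<Rightarrow> 'u \<Rightarrow> 'u \<Rightarrow> real" where
  "avg_dist_RN E w loc u v =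
     sum_list (map (\<lambda>x. sum_list (map (\<lambda>y. dist_RN E w x y) (loc v))) (loc u))
     / (real (length (loc u)) * real (length (loc v)))"

definition social_network :: "'u set \<Rightarrow> ('u \<Rightarrow> 'u \<Rightarrow> bool) \<Rightarrow> bool" where
  "social_network U A \<longleftrightarrow> finite U \<and> (\<forall>u v. A u v \<longrightarrow> u \<in> U \<and> v \<in> U \<and> u \<noteq> v \<and> A v u)"

definition sn_walk :: "('u \<Rightarrow> 'u \<Rightarrow> bool) \<Rightarrow> 'u list \<Rightarrow> bool" where
  "sn_walk A xs \<longleftrightarrow> xs \<noteq> [] \<and> (\<forall>i. Suc i < length xs \<longrightarrow> A (xs ! i) (xs ! Suc i))"

text \<open>Hop distance in the whole social network (infinite if unreachable).\<close>
definition dist_SN :: "('u \<Rightarrow> 'u \<Rightarrow> bool) \<Rightarrow> 'u \<Rightarrow> 'u \<Rightarrow> enat" where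
  "dist_SN A u v = Inf {enat (length xs - 1) | xs. sn_walk A xs \<and> hd xs = u \<and> last xs = v}"

definition connected_in :: "('u \<Rightarrow> 'u \<Rightarrow> bool) \<Rightarrow> 'u set \<Rightarrow> bool" where
  "connected_in A S \<longleftrightarrow> S \<noteq> {} \<and>
     (\<forall>u\<in>S. \<forall>v\<in>S. \<exists>xs. sn_walk A xs \<and> set xs \<subseteq> S \<and> hd xs = u \<and> last xs = v)"

definition support :: "('u \<Rightarrow> 'u \<Rightarrow> bool) \<Rightarrow> 'u set \<Rightarrow> 'u \<Rightarrow> 'u \<Rightarrow> nat" where
  "support A S u v = card {x \<in> S. A u x \<and> A v x}"

definition kd_truss :: "('u \<Rightarrow> 'u \<Rightarrow> bool) \<Rightarrow> 'u set \<Rightarrow> nat \<Rightarrow> nat \<Rightarrow> bool" where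
  "kd_truss A S k' d \<longleftrightarrow> connected_in A S
     \<and> (\<forall>u\<in>S. \<forall>v\<in>S. A u v \<longrightarrow> int (support A S u v) \<ge> int k' - 2)
     \<and> (\<forall>u\<in>S. \<forall>v\<in>S. dist_SN A u v < enat d)"

definition path_influence :: "('u \<Rightarrow> 'u \<Rightarrow> nat \<Rightarrow> real) \<Rightarrow> nat \<Rightarrow> (nat \<Rightarrow> real) \<Rightarrow> 'u list \<Rightarrow> real" where
  "path_influence tp m Tq xs = (\<Prod>i<length xs - 1. (\<Sum>j<m. tp (xs ! i) (xs ! Suc i) j * Tq j))"

definition ss_truss ::
  "'u set \<Rightarrow> ('u \<Rightarrow> 'u \<Rightarrow> bool) \<Rightarrow> ('v \<times> 'v) set \<Rightarrow> ('v \<Rightarrow> 'v \<Rightarrow> real) \<Rightarrow> ('u \<Rightarrow> 'v list)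
   \<Rightarrow> ('u \<Rightarrow> 'u \<Rightarrow> nat \<Rightarrow> real) \<Rightarrow> nat \<Rightarrow> (nat \<Rightarrow> real)
   \<Rightarrow> nat \<Rightarrow> nat \<Rightarrow> real \<Rightarrow> real \<Rightarrow> 'u set \<Rightarrow> bool" where
  "ss_truss U A E w loc tp m Tq k' d \<sigma> \<theta> S \<longleftrightarrow>
     S \<subseteq> U \<and> kd_truss A S k' d
     \<and> (\<forall>u\<in>S. \<forall>v\<in>S. avg_dist_RN E w loc u v < \<sigma>)
     \<and> (\<forall>u\<in>S. \<forall>v\<in>S. \<exists>xs. sn_walk A xs \<and> distinct xs \<and> set xs \<subseteq> S \<and> hd xs = u \<and> last xs = v
                         \<and> path_influence tp m Tq xs \<ge> \<theta>)"

definition piv_avg :: "('v \<times> 'v) set \<Rightarrow> ('v \<Rightarrow> 'v \<Rightarrow> real) \<Rightarrow> ('u \<Rightarrow> 'v list) \<Rightarrow> 'u \<Rightarrow> 'v \<Rightarrow> real" where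
  "piv_avg E w loc u p = sum_list (map (\<lambda>x. dist_RN E w x p) (loc u)) / real (length (loc u))"

definition lb_dist_RN :: "('v \<times> 'v) set \<Rightarrow> ('v \<Rightarrow> 'v \<Rightarrow> real) \<Rightarrow> ('u \<Rightarrow> 'v list) \<Rightarrow> 'v list \<Rightarrow> 'u \<Rightarrow> 'u set \<Rightarrow> real" where
  "lb_dist_RN E w loc rpiv q e = Max ((\<lambda>k.
      let aq = piv_avg E w loc q (rpiv ! k);
          lb = Min ((\<lambda>u. piv_avg E w loc u (rpiv ! k)) ` e);
          ub = Max ((\<lambda>u. piv_avg E w loc u (rpiv ! k)) ` e)
      in if aq < lb then lb - aq else if aq > ub then aq - ub else 0) ` {..<length rpiv})"

end

theory Submission
  imports Defs
begin

text \<open>Averaging the triangle inequality of the shortest-path distance over the location lists of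
  two users u, v gives |a(u,k) - a(v,k)| \<le> max (avg_dist(u,v), avg_dist(v,u)) for every pivot.
  If u \<in> e then a(u,k) lies in [lb_k(e), ub_k(e)], so each c_k is at most |a(q,k) - a(u,k)|.
  A spatial-social truss containing q and u has both average distances below \<sigma>, hence
  lb_dist_RN < \<sigma>.\<close>

lemma rn_walk_Cons_Cons [simp]:
  "rn_walk E (x # y # zs) \<longleftrightarrow> (x, y) \<in> E \<and> rn_walk E (y # zs)"
  unfolding rn_walk_def by (auto simp: less_Suc_eq_0_disj All_less_Suc2)

lemma rn_walk_singleton [simp]: "rn_walk E [x]"
  by (simp add: rn_walk_def)

lemma rn_walk_Nil [simp]: "\<not> rn_walk E []"
  by (simp add: rn_walk_def)

lemma walk_len_singleton [simp]: "walk_len w [x] = 0"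
  by (simp add: walk_len_def)

lemma walk_len_Cons_Cons [simp]:
  "walk_len w (x # y # zs) = w x y + walk_len w (y # zs)"
  unfolding walk_len_def by (simp add: sum.lessThan_Suc_shift del: sum.lessThan_Suc)

lemma rn_walk_append_tl:
  assumes "rn_walk E xs" "rn_walk E ys" "last xs = hd ys"
  shows "rn_walk E (xs @ tl ys)"
proof -
  have "ys \<noteq> []" using assms(2) by (auto simp: rn_walk_def)
  with assms show ?thesis by (induction xs rule: induct_list012) (auto simp: neq_Nil_conv)
qed

lemma walk_len_append_tl:
  assumes "xs \<noteq> []" "ys \<noteq> []" "last xs = hd ys"
  shows "walk_len w (xs @ tl ys) = walk_len w xs + walk_len w ys"
  using assms by (induction xs rule: induct_list012) (auto simp: neq_Nil_conv)

lemma walk_len_nonneg: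
  assumes "road_network V E w" "rn_walk E xs"
  shows "walk_len w xs \<ge> 0"
  using assms(2)
proof (induction xs rule: induct_list012)
  case (3 x y zs)
  then have "w x y \<ge> 0" using assms(1) by (auto simp: road_network_def)
  with 3 show ?case by simp
qed simp_all

lemma dist_RN_le_walk_len:
  assumes "road_network V E w" "rn_walk E xs"
  shows "dist_RN E w (hd xs) (last xs) \<le> walk_len w xs"
  unfolding dist_RN_def
proof (rule cInf_lower)
  show "bdd_below {walk_len w xs |xs. rn_walk E xs \<and> hd xs = hd xs' \<and> last xs = last xs'}" for xs'
    using walk_len_nonneg[OF assms(1)] by (fastforce intro: bdd_belowI)
qed (use assms(2) in blast)

lemma dist_RN_triangle:
  assumes rn: "road_network V E w" and "x \<in> V" "y \<in> V" "p \<in> V"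
  shows "dist_RN E w x p \<le> dist_RN E w x y + dist_RN E w y p"
proof -
  have walks_exist: "{walk_len w xs |xs. rn_walk E xs \<and> hd xs = a \<and> last xs = b} \<noteq> {}"
    if "a \<in> V" "b \<in> V" for a b
    using rn that unfolding road_network_def by blast
  have via_y: "dist_RN E w x p \<le> walk_len w xs + walk_len w ys"
    if xs: "rn_walk E xs" "hd xs = x" "last xs = y"
      and ys: "rn_walk E ys" "hd ys = y" "last ys = p" for xs ys
  proof -
    have "xs \<noteq> []" "ys \<noteq> []" using xs(1) ys(1) by (auto simp: rn_walk_def)
    moreover have "last (xs @ tl ys) = p"
      using calculation xs(3) ys(2,3) by (cases ys) (auto simp: last_append)
    ultimately show ?thesis
      using dist_RN_le_walk_len[OF rn rn_walk_append_tl[of E xs ys]] walk_len_append_tl[of xs ys w]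
        xs ys by simp
  qed
  have "dist_RN E w x p - walk_len w xs \<le> dist_RN E w y p"
    if xs: "rn_walk E xs" "hd xs = x" "last xs = y" for xs
    unfolding dist_RN_def[of E w y p]
    by (rule cInf_greatest[OF walks_exist[OF \<open>y \<in> V\<close> \<open>p \<in> V\<close>]]) (use via_y xs in force)
  then have "dist_RN E w x p - dist_RN E w y p \<le> dist_RN E w x y"
    unfolding dist_RN_def[of E w x y]
    by (intro cInf_greatest[OF walks_exist[OF \<open>x \<in> V\<close> \<open>y \<in> V\<close>]]) force
  then show ?thesis by simp
qed

lemma mean_diff_le_cross_mean:
  fixes D :: "'a \<Rightarrow> 'a \<Rightarrow> real"
  assumes "xs \<noteq> []" "ys \<noteq> []"
    and triangle: "\<And>x y. x \<in> set xs \<Longrightarrow> y \<in> set ys \<Longrightarrow> D x p \<le> D x y + D y p"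
  shows "sum_list (map (\<lambda>x. D x p) xs) / length xs - sum_list (map (\<lambda>y. D y p) ys) / length ys
         \<le> sum_list (map (\<lambda>x. sum_list (map (D x) ys)) xs) / (real (length xs) * real (length ys))"
proof -
  define m n where "m = real (length xs)" and "n = real (length ys)"
  define Sx Sy T where "Sx = sum_list (map (\<lambda>x. D x p) xs)" and "Sy = sum_list (map (\<lambda>y. D y p) ys)"
    and "T = sum_list (map (\<lambda>x. sum_list (map (D x) ys)) xs)"
  have "m > 0" "n > 0" using assms(1,2) by (auto simp: m_def n_def)
  have row: "n * D x p \<le> sum_list (map (D x) ys) + Sy" if "x \<in> set xs" for x
  proof -
    have "n * D x p = sum_list (map (\<lambda>y. D x p) ys)"
      by (simp add: n_def sum_list_triv)
    also have "\<dots> \<le> sum_list (map (\<lambda>y. D x y + D y p) ys)"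
      by (rule sum_list_mono) (use triangle that in blast)
    also have "\<dots> = sum_list (map (D x) ys) + Sy"
      by (simp add: Sy_def sum_list_addf)
    finally show ?thesis .
  qed
  have "n * Sx = sum_list (map (\<lambda>x. n * D x p) xs)"
    by (simp add: Sx_def sum_list_const_mult)
  also have "\<dots> \<le> sum_list (map (\<lambda>x. sum_list (map (D x) ys) + Sy) xs)"
    by (rule sum_list_mono) (rule row)
  also have "\<dots> = T + m * Sy"
    by (simp add: T_def m_def sum_list_addf sum_list_triv)
  finally have "n * Sx - m * Sy \<le> T" by simp
  moreover have "Sx / m - Sy / n = (n * Sx - m * Sy) / (m * n)"
    using \<open>m > 0\<close> \<open>n > 0\<close> by (simp add: field_simps)
  ultimately have "Sx / m - Sy / n \<le> T / (m * n)"
    using \<open>m > 0\<close> \<open>n > 0\<close> by (simp add: divide_right_mono)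
  then show ?thesis by (simp add: Sx_def Sy_def T_def m_def n_def)
qed

lemma piv_avg_diff_le_avg_dist_RN:
  assumes rn: "road_network V E w"
    and "loc u \<noteq> []" "set (loc u) \<subseteq> V" "loc v \<noteq> []" "set (loc v) \<subseteq> V" "p \<in> V"
  shows "piv_avg E w loc u p - piv_avg E w loc v p \<le> avg_dist_RN E w loc u v"
  unfolding piv_avg_def avg_dist_RN_def
  by (rule mean_diff_le_cross_mean) (use assms dist_RN_triangle[OF rn] in blast)+

definition interval_gap :: "real \<Rightarrow> real \<Rightarrow> real \<Rightarrow> real" where
  "interval_gap lo hi x = (if x < lo then lo - x else if x > hi then x - hi else 0)"

lemma interval_gap_le_dist: "lo \<le> y \<Longrightarrow> y \<le> hi \<Longrightarrow> interval_gap lo hi x \<le> \<bar>x - y\<bar>"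
  by (simp add: interval_gap_def)

lemma lb_dist_RN_eq_Max_interval_gap:
  "lb_dist_RN E w loc rpiv q e = Max ((\<lambda>k.
      interval_gap (Min ((\<lambda>u. piv_avg E w loc u (rpiv ! k)) ` e))
                   (Max ((\<lambda>u. piv_avg E w loc u (rpiv ! k)) ` e))
                   (piv_avg E w loc q (rpiv ! k))) ` {..<length rpiv})"
  by (simp add: lb_dist_RN_def interval_gap_def Let_def)

lemma lb_dist_RN_le_avg_dist_RN:
  assumes rn: "road_network V E w"
    and q: "loc q \<noteq> []" "set (loc q) \<subseteq> V" and u: "loc u \<noteq> []" "set (loc u) \<subseteq> V"
    and "rpiv \<noteq> []" "set rpiv \<subseteq> V" and "finite e" "u \<in> e"
  shows "lb_dist_RN E w loc rpiv q e \<le> max (avg_dist_RN E w loc q u) (avg_dist_RN E w loc u q)"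
proof -
  have "interval_gap (Min ((\<lambda>v. piv_avg E w loc v (rpiv ! k)) ` e))
                     (Max ((\<lambda>v. piv_avg E w loc v (rpiv ! k)) ` e))
                     (piv_avg E w loc q (rpiv ! k))
        \<le> max (avg_dist_RN E w loc q u) (avg_dist_RN E w loc u q)"
    if "k < length rpiv" for k
  proof -
    let ?a = "\<lambda>v. piv_avg E w loc v (rpiv ! k)"
    have p: "rpiv ! k \<in> V" using that \<open>set rpiv \<subseteq> V\<close> nth_mem by blast
    have "Min (?a ` e) \<le> ?a u" "?a u \<le> Max (?a ` e)"
      using \<open>finite e\<close> \<open>u \<in> e\<close> by auto
    then have "interval_gap (Min (?a ` e)) (Max (?a ` e)) (?a q) \<le> \<bar>?a q - ?a u\<bar>"
      by (rule interval_gap_le_dist)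
    also have "\<dots> \<le> max (avg_dist_RN E w loc q u) (avg_dist_RN E w loc u q)"
      using piv_avg_diff_le_avg_dist_RN[where loc = loc, OF rn q u p]
        piv_avg_diff_le_avg_dist_RN[where loc = loc, OF rn u q p]
      by linarith
    finally show ?thesis .
  qed
  then show ?thesis
    unfolding lb_dist_RN_eq_Max_interval_gap using \<open>rpiv \<noteq> []\<close> by (subst Max_le_iff) auto
qed

theorem lemma6:
  fixes V :: "'v set" and E :: "('v \<times> 'v) set" and w :: "'v \<Rightarrow> 'v \<Rightarrow> real"
    and U :: "'u set" and A :: "'u \<Rightarrow> 'u \<Rightarrow> bool" and loc :: "'u \<Rightarrow> 'v list"
    and tp :: "'u \<Rightarrow> 'u \<Rightarrow> nat \<Rightarrow> real" and m :: nat
    and rpiv :: "'v list" and q :: 'u and e :: "'u set" and \<sigma> :: real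
  assumes "road_network V E w"
    and "social_network U A"
    and "\<forall>u\<in>U. loc u \<noteq> [] \<and> set (loc u) \<subseteq> V"
    and "rpiv \<noteq> []" and "set rpiv \<subseteq> V"
    and "q \<in> U"
    and "finite e" and "e \<noteq> {}" and "e \<subseteq> U"
    and "\<sigma> > 0"
    and "lb_dist_RN E w loc rpiv q e > \<sigma>"
  shows "\<forall>(k'::nat) (d::nat) (\<theta>::real) (Tq::nat \<Rightarrow> real) S.
           ss_truss U A E w loc tp m Tq k' d \<sigma> \<theta> S \<and> q \<in> S \<longrightarrow> (\<forall>u\<in>e. u \<notin> S)"
proof (intro allI impI ballI notI)
  fix k' d \<theta> Tq S u
  assume "ss_truss U A E w loc tp m Tq k' d \<sigma> \<theta> S \<and> q \<in> S" and "u \<in> e" and "u \<in> S"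
  then have close: "avg_dist_RN E w loc q u < \<sigma>" "avg_dist_RN E w loc u q < \<sigma>"
    unfolding ss_truss_def by auto
  have "u \<in> U"
    using \<open>u \<in> e\<close> \<open>e \<subseteq> U\<close> by blast
  then have "lb_dist_RN E w loc rpiv q e \<le> max (avg_dist_RN E w loc q u) (avg_dist_RN E w loc u q)"
    using assms(3,6)
    by (intro lb_dist_RN_le_avg_dist_RN[OF assms(1) _ _ _ _ assms(4,5,7) \<open>u \<in> e\<close>]) auto
  with close show False
    using assms(11) by linarith
qed

end
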